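(* For $n\ge1$ and $r\ge0$, the number of simple two-dimensional lattice paths of length $n$ with compactification degree $r$ is \[ 4^{r+1}\sum_{\lambda\ge0}\lambda(-1)^{\lambda-1}\bigg[\binom{2n-1}{n-\lambda2^r}-\binom{2n-1}{n-\lambda2^r-1}\bigg], \] where binomial coefficients with negative lower index are $0$.
   Context: A simple two-dimensional lattice path is a finite nonempty word over the steps $\{\uparrow,\rightarrow,\downarrow,\leftarrow\}$; its length is the number of steps. The reduction $\Phi_L(\ell)$ of a path $\ell$ of length $\ge2$ is defined as follows. First, if the first step of $\ell$ is vertical, the entire path is rotated by $90^\circ$ clockwise; then, if the last step of the resulting path is horizontal, this last step alone is rotated by $90^\circ$ clockwise. The resulting path starts with a horizontal and ends with a vertical step, so it decomposes uniquely as $H_1V_1H_2V_2\cdots H_kV_k$ ($k\ge1$), where each $H_i$ is a nonempty maximal run of horizontal steps and each $V_i$ a nonempty maximal run of vertical steps. Each block $H_iV_i$ is replaced by one diagonal step: $\nearrow$ if $H_i$ starts with $\rightarrow$ and $V_i$ starts with $\uparrow$; $\searrow$ if $H_i$ starts with $\rightarrow$ and $V_i$ with $\downarrow$; $\swarrow$ if $H_i$ starts with $\leftarrow$ and $V_i$ with $\downarrow$; $\nwarrow$ if $H_i$ starts with $\leftarrow$ and $V_i$ with $\uparrow$. Finally this diagonal path is rotated by $45^\circ$ clockwise, giving a simple lattice path $\Phi_L(\ell)$ of length $k$. The compactification degree $\mathrm{cdeg}(\ell)$ of a path $\ell$ of length $\ge1$ is the number $m\ge0$ such that $\Phi_L^m(\ell)$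 consists of a single step. *)

theory Defs
  imports Main
begin

datatype step = U | R | D | L

type_synonym path = "step list"

fun horiz :: "step \<Rightarrow> bool" where
  "horiz R = True" | "horiz L = True" | "horiz U = False" | "horiz D = False"

abbreviation vert :: "step \<Rightarrow> bool" where
  "vert s \<equiv> \<not> horiz s"

fun rot :: "step \<Rightarrow> step" where
  "rot U = R" | "rot R = D" | "rot D = L" | "rot L = U"

text \<open>Block H V (H starting with h, V starting with v) gives a diagonal step,
  which after rotation by 45 degrees clockwise becomes: NE -> R, SE -> D, SW -> L, NW -> U.\<close>
fun diag :: "step \<Rightarrow> step \<Rightarrow> step" where
  "diag R U = R" | "diag R D = D" | "diag L D = L" | "diag L U = U"
| "diag _ _ = U"

text \<open>Decompose a path H_1 V_1 ... H_k V_k into maximal runs and replace each block.\<close>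
function blocks :: "path \<Rightarrow> path" where
  "blocks [] = []"
| "blocks (h # xs) =
     (case dropWhile horiz (h # xs) of
        [] \<Rightarrow> []
      | v # ys \<Rightarrow> diag h v # blocks (dropWhile vert ys))"
  by pat_completeness auto
termination
proof (relation "measure length")
  fix h xs v ys
  assume "dropWhile horiz (h # xs) = v # ys"
  then have "length (v # ys) \<le> length (h # xs)"
    by (metis length_dropWhile_le)
  moreover have "length (dropWhile vert ys) \<le> length ys" by (rule length_dropWhile_le)
  ultimately show "(dropWhile vert ys, h # xs) \<in> measure length" by simp
qed auto

text \<open>The reduction Phi_L (meaningful for paths of length at least 2).\<close>
definition PhiL :: "path \<Rightarrow> path" where
  "PhiL l = (let l1 = (if vert (hd l) then map rot l else l);
                 l2 = (if horiz (last l1) then butlast l1 @ [rot (last l1)] else l1)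
             in blocks l2)"

definition cdeg :: "path \<Rightarrow> nat" where
  "cdeg l = (LEAST m. length ((PhiL ^^ m) l) = 1)"

definition binom :: "nat \<Rightarrow> int \<Rightarrow> int" where
  "binom a k = (if k < 0 then 0 else int (a choose nat k))"

end

theory Submission
  imports Defs "HOL-Computational_Algebra.Formal_Power_Series"
begin

text \<open>
  Let \<open>Cat\<close> be the power series with \<open>Cat = x (1 + Cat)\<^sup>2\<close> (the Catalan series minus 1). The
  bracket in the formula is the ballot number \<open>T(n, M) = [x\<^sup>n] Cat\<^sup>M\<close>.

  After the rotations, a path of length \<open>m + 1\<close> is a horizontal first step, a word of length
  \<open>m - 1\<close> and a vertical last step, each end carrying a two-fold choice; collapsing runs then
  shows that every path of length \<open>k + 1\<close> has exactly \<open>4 K(m, k)\<close> preimages of length \<open>m + 1\<close>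
  under \<open>\<Phi>\<^sub>L\<close>, where \<open>\<Sum>\<^sub>m K(m, k) x\<^sup>m\<^sup>+\<^sup>1 = \<sigma>\<^sup>k\<^sup>+\<^sup>1\<close> with \<open>\<sigma> = (x / (1 - 2x))\<^sup>2\<close>.
  Hence the counts satisfy \<open>A(m + 1, r + 1) = 4 \<Sum>\<^sub>k K(m, k) A(k + 1, r)\<close>.

  On the other side, \<open>Cat \<circ> \<sigma> = Cat\<^sup>2\<close>, so \<open>T(m + 1, 2M) = \<Sum>\<^sub>j K(m, j) T(j + 1, M)\<close>, and
  the right-hand side of the theorem obeys the same recursion in \<open>r\<close>. For \<open>r = 0\<close> it is
  \<open>[x\<^sup>n] Cat_inv \<circ> Cat = [x\<^sup>n] x\<close>, where \<open>Cat_inv = x / (1 + x)\<^sup>2 = \<Sum> i (-1)\<^sup>i\<^sup>+\<^sup>1 x\<^sup>i\<close> is the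
  compositional inverse of \<open>Cat\<close>; this matches the four paths of length 1.
\<close>

unbundle fps_syntax

section \<open>Ballot numbers\<close>

definition ballot :: "nat \<Rightarrow> nat \<Rightarrow> int" where
  "ballot n M = binom (2*n - 1) (int n - int M) - binom (2*n - 1) (int n - int M - 1)"

lemma binom_Suc: "binom (Suc a) k = binom a (k - 1) + binom a k"
proof (cases "k \<le> 0")
  case True
  then show ?thesis by (auto simp: binom_def)
next
  case False
  then obtain j where "nat k = Suc j" "k - 1 = int j"
    by (intro that[of "nat (k - 1)"]) auto
  with False show ?thesis by (simp add: binom_def)
qed

lemma ballot_Suc:
  assumes "n \<ge> 1" "M \<ge> 1"
  shows "ballot (Suc n) M = ballot n (M - 1) + 2 * ballot n M + ballot n (M + 1)"
proof -
  define a where "a = 2*n - 1"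
  have a: "2*n - 1 = a" "2 * Suc n - 1 = Suc (Suc a)"
    using assms by (simp_all add: a_def)
  have "binom (Suc (Suc a)) k = binom a (k - 2) + 2 * binom a (k - 1) + binom a k" for k
    by (simp add: binom_Suc algebra_simps)
  moreover have "int (M - 1) = int M - 1" using assms by simp
  ultimately show ?thesis
    unfolding ballot_def a by (simp add: algebra_simps)
qed

lemma ballot_0: "n \<ge> 1 \<Longrightarrow> ballot n 0 = 0"
  using binomial_symmetric[of "n - 1" "2*n - 1"]
  by (simp add: ballot_def binom_def nat_diff_distrib algebra_simps)

lemma ballot_eq_0: "M > n \<Longrightarrow> ballot n M = 0"
  by (simp add: ballot_def binom_def)

lemma ballot_1: "M \<ge> 1 \<Longrightarrow> ballot 1 M = (if M = 1 then 1 else 0)"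
  by (auto simp: ballot_def binom_def)

section \<open>The series \<open>Cat\<close> and its powers\<close>

definition Cat_inv :: "rat fps" where
  "Cat_inv = Abs_fps (\<lambda>i. of_int (int i * (-1) ^ (i + 1)))"

lemma Cat_inv_times_square: "Cat_inv * (1 + fps_X)\<^sup>2 = fps_X"
proof (rule fps_ext)
  fix n
  have "(Cat_inv * (1 + fps_X)\<^sup>2) $ n = (Cat_inv + 2 * (fps_X * Cat_inv) + fps_X * (fps_X * Cat_inv)) $ n"
    by (simp add: power2_eq_square algebra_simps)
  also have "\<dots> = fps_X $ n"
  proof (cases "n \<le> 1")
    case False
    then obtain k where n: "n = Suc (Suc k)"
      using less_imp_Suc_add[of 1 n] by auto
    have "of_nat (k + 2) * (-1) ^ Suc (Suc (Suc k)) + 2 * (of_nat (k + 1) * (-1) ^ Suc (Suc k))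
        + of_nat k * (-1) ^ Suc k = (0 :: rat)"
      by (simp add: algebra_simps)
    then show ?thesis by (simp add: n Cat_inv_def numeral_fps_const)
  qed (auto simp: Cat_inv_def numeral_fps_const le_Suc_eq)
  finally show "(Cat_inv * (1 + fps_X)\<^sup>2) $ n = fps_X $ n" .
qed

definition Cat :: "rat fps" where
  "Cat = fps_inv Cat_inv"

lemma Cat_nth_0: "Cat $ 0 = 0"
  by (simp add: Cat_def fps_inv_def)

lemma Cat_inv_compose_Cat: "Cat_inv oo Cat = fps_X"
  unfolding Cat_def by (rule fps_inv_right) (simp_all add: Cat_inv_def)

lemma Cat_eq: "Cat = fps_X * (1 + Cat)\<^sup>2"
proof -
  have "(Cat_inv oo Cat) * (1 + Cat)\<^sup>2 = (Cat_inv * (1 + fps_X)\<^sup>2) oo Cat"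
    by (simp only: fps_compose_mult_distrib[OF Cat_nth_0] fps_compose_power[OF Cat_nth_0, symmetric]
        fps_compose_add_distrib fps_X_fps_compose_startby0[OF Cat_nth_0] fps_compose_1)
  then show ?thesis
    by (simp only: Cat_inv_compose_Cat Cat_inv_times_square fps_X_fps_compose_startby0[OF Cat_nth_0])
qed

lemma Cat_power_nth_Suc:
  "K \<ge> 1 \<Longrightarrow> (Cat ^ K) $ Suc m = (Cat ^ (K - 1)) $ m + 2 * (Cat ^ K) $ m + (Cat ^ (K + 1)) $ m"
proof -
  assume "K \<ge> 1"
  then obtain j where K: "K = Suc j" by (cases K) auto
  have "Cat ^ K = Cat ^ j * (fps_X * (1 + Cat)\<^sup>2)"
    by (subst Cat_eq[symmetric]) (simp add: K)
  also have "\<dots> = fps_X * (Cat ^ j + 2 * Cat ^ Suc j + Cat ^ Suc (Suc j))"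
    by (simp add: power2_eq_square algebra_simps)
  finally have "(Cat ^ K) $ Suc m = (Cat ^ j + 2 * Cat ^ Suc j + Cat ^ Suc (Suc j)) $ m"
    by (simp only: fps_X_mult_nth) simp
  then show ?thesis by (simp add: K numeral_fps_const)
qed

lemma Cat_power_nth: "(Cat ^ M) $ Suc n = of_int (ballot (Suc n) M)"
proof (induction n arbitrary: M)
  case 0
  show ?case
    using Cat_power_nth_Suc[of M 0] ballot_1[of M]
    by (cases "M = 0") (auto simp: ballot_0 fps_power_zeroth Cat_nth_0 power_0_left)
next
  case (Suc n)
  show ?case
  proof (cases "M = 0")
    case False
    then have "(Cat ^ M) $ Suc (Suc n) = of_int (ballot (Suc n) (M - 1))
        + 2 * of_int (ballot (Suc n) M) + of_int (ballot (Suc n) (M + 1))"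
      by (simp only: Cat_power_nth_Suc[of M] Suc.IH)
    then show ?thesis
      using False ballot_Suc[of "Suc n" M] by simp
  qed (simp add: ballot_0)
qed

lemma alternating_ballot_sum:
  assumes "n \<ge> 1"
  shows "(\<Sum>k\<in>{0..n}. int k * (-1) ^ (k - 1) * ballot n k) = (if n = 1 then 1 else 0)"
proof -
  obtain m where n: "n = Suc m" using assms by (cases n) auto
  have sign: "int k * (-1) ^ (k - 1) = int k * (-1) ^ (k + 1)" for k :: nat
    by (cases k) simp_all
  have "(of_int (\<Sum>k\<in>{0..n}. int k * (-1) ^ (k - 1) * ballot n k) :: rat) =
      (\<Sum>k\<in>{0..n}. Cat_inv $ k * (Cat ^ k) $ n)"
    by (simp only: sign) (simp add: n Cat_inv_def Cat_power_nth)
  also have "\<dots> = fps_X $ n"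
    by (simp only: Cat_inv_compose_Cat[symmetric] fps_compose_nth)
  also have "\<dots> = of_int (if n = 1 then 1 else 0)"
    by simp
  finally show ?thesis
    by (simp only: of_int_eq_iff)
qed

section \<open>Collapsing runs\<close>

lemma UNIV_step: "(UNIV :: step set) = {U, R, D, L}"
  using step.exhaust by auto

instance step :: finite
  by standard (simp add: UNIV_step)

lemma sum_UNIV_step: "(\<Sum>x\<in>UNIV. g x) = g U + g R + g D + (g L :: 'a::comm_monoid_add)"
  by (simp add: UNIV_step add.assoc)

definition paths :: "nat \<Rightarrow> path set" where
  "paths n = {w. length w = n}"

lemma finite_paths: "finite (paths n)"
  using finite_lists_length_eq[of "UNIV :: step set" n] by (simp add: paths_def)

lemma paths_0: "paths 0 = {[]}"
  by (auto simp: paths_def)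

lemma sum_paths_Cons: "(\<Sum>w\<in>paths (Suc n). f w) = (\<Sum>x\<in>UNIV. \<Sum>w\<in>paths n. f (x # w))"
proof -
  have "(\<Sum>(x, w)\<in>UNIV \<times> paths n. f (x # w)) = (\<Sum>w\<in>paths (Suc n). f w)"
    by (rule sum.reindex_bij_witness[where i="\<lambda>w. (hd w, tl w)" and j="\<lambda>(x, w). x # w"])
       (auto simp: paths_def length_Suc_conv)
  then show ?thesis by (simp add: sum.cartesian_product)
qed

lemma sum_paths_snoc: "(\<Sum>w\<in>paths (Suc n). f w) = (\<Sum>x\<in>UNIV. \<Sum>w\<in>paths n. f (w @ [x]))"
proof -
  have "(\<Sum>(x, w)\<in>UNIV \<times> paths n. f (w @ [x])) = (\<Sum>w\<in>paths (Suc n). f w)"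
    by (rule sum.reindex_bij_witness[where i="\<lambda>w. (last w, butlast w)" and j="\<lambda>(x, w). w @ [x]"])
       (auto simp: paths_def simp flip: length_greater_0_conv)
  then show ?thesis by (simp add: sum.cartesian_product)
qed

lemma sum_paths_map_rot: "(\<Sum>w\<in>paths n. f (map rot w)) = (\<Sum>w\<in>paths n. f w)"
proof -
  have "rot (rot (rot (rot s))) = s" for s by (cases s) simp_all
  then show ?thesis
    by (intro sum.reindex_bij_witness[where i="map (\<lambda>s. rot (rot (rot s)))" and j="map rot"])
       (auto simp: paths_def o_def)
qed

text \<open>For horizontal \<open>h\<close>, \<open>blocks_H h w\<close> computes \<open>blocks (h # w)\<close> letter by letter and is
  \<open>None\<close> unless \<open>w\<close> ends vertically; \<open>blocks_V\<close> is the state between two blocks.\<close>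

fun blocks_V :: "path \<Rightarrow> path option" and blocks_H :: "step \<Rightarrow> path \<Rightarrow> path option" where
  "blocks_V [] = Some []"
| "blocks_V (x # w) = (if horiz x then blocks_H x w else blocks_V w)"
| "blocks_H h [] = None"
| "blocks_H h (x # w) =
     (if horiz x then blocks_H h w else map_option (Cons (diag h x)) (blocks_V w))"

lemma blocks_V_H_eq:
  "blocks_V w = (if w = [] \<or> vert (last w) then Some (blocks (dropWhile vert w)) else None) \<and>
   (\<forall>h. horiz h \<longrightarrow>
      blocks_H h w = (if w \<noteq> [] \<and> vert (last w) then Some (blocks (h # w)) else None))"
proof (induction w)
  case (Cons x w)
  then show ?case by (cases "horiz x") (auto split: list.splits)
qed simp

lemma blocks_V_H_length:
  "(\<forall>p. blocks_V w = Some p \<longrightarrow> 2 * length p \<le> length w) \<and>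
   (\<forall>h p. blocks_H h w = Some p \<longrightarrow> p \<noteq> [] \<and> 2 * length p \<le> Suc (length w))"
proof (induction w)
  case (Cons x w)
  then show ?case by (cases "horiz x") (force simp: map_option_eq_Some)+
qed simp

definition sum_paths :: "nat \<Rightarrow> (path \<Rightarrow> int) \<Rightarrow> int" where
  "sum_paths n F = (\<Sum>w\<in>paths n. F w)"

definition sum_blocks_V :: "nat \<Rightarrow> (path \<Rightarrow> int) \<Rightarrow> int" where
  "sum_blocks_V n F = (\<Sum>w\<in>paths n. case_option 0 F (blocks_V w))"

definition sum_blocks_H :: "nat \<Rightarrow> step \<Rightarrow> (path \<Rightarrow> int) \<Rightarrow> int" where
  "sum_blocks_H n h F = (\<Sum>w\<in>paths n. case_option 0 F (blocks_H h w))"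

definition sum_diag_Cons :: "step \<Rightarrow> nat \<Rightarrow> (path \<Rightarrow> int) \<Rightarrow> int" where
  "sum_diag_Cons h k F = sum_paths k (\<lambda>p. F (diag h U # p)) + sum_paths k (\<lambda>p. F (diag h D # p))"

lemma sum_diag_Cons_R_L: "sum_diag_Cons R k F + sum_diag_Cons L k F = sum_paths (Suc k) F"
  by (simp add: sum_diag_Cons_def sum_paths_def sum_paths_Cons sum_UNIV_step sum.distrib)

text \<open>Transfer-matrix counts: for every \<open>p\<close> of length \<open>k\<close>, exactly \<open>fibre_V n k\<close> words \<open>w\<close> of
  length \<open>n\<close> satisfy \<open>blocks_V w = Some p\<close>, and for horizontal \<open>h\<close> and vertical \<open>v\<close> exactly
  \<open>fibre_H n k\<close> satisfy \<open>blocks_H h w = Some (diag h v # p)\<close>.\<close>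

fun fibre_V :: "nat \<Rightarrow> nat \<Rightarrow> int" and fibre_H :: "nat \<Rightarrow> nat \<Rightarrow> int" where
  "fibre_V 0 k = (if k = 0 then 1 else 0)"
| "fibre_H 0 k = 0"
| "fibre_V (Suc n) k = 2 * fibre_V n k + (if k = 0 then 0 else fibre_H n (k - 1))"
| "fibre_H (Suc n) k = 2 * fibre_H n k + fibre_V n k"

lemma fibre_eq_0: "k > n \<Longrightarrow> fibre_V n k = 0 \<and> fibre_H n k = 0"
proof (induction n arbitrary: k)
  case (Suc n)
  then show ?case using Suc.IH[of k] Suc.IH[of "k - 1"] by auto
qed simp

lemma sum_fibre_V_extend:
  "n \<le> N \<Longrightarrow> (\<Sum>k\<le>N. fibre_V n k * g k) = (\<Sum>k\<le>n. fibre_V n k * g k)"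
  by (rule sum.mono_neutral_right) (auto simp: fibre_eq_0)

lemma sum_fibre_H_extend:
  "n \<le> N \<Longrightarrow> (\<Sum>k\<le>N. fibre_H n k * g k) = (\<Sum>k\<le>n. fibre_H n k * g k)"
  by (rule sum.mono_neutral_right) (auto simp: fibre_eq_0)

lemma sum_blocks_V_Suc:
  "sum_blocks_V (Suc n) F = 2 * sum_blocks_V n F + sum_blocks_H n R F + sum_blocks_H n L F"
  by (simp add: sum_blocks_V_def sum_blocks_H_def sum_paths_Cons sum_UNIV_step)

lemma sum_blocks_H_Suc:
  "sum_blocks_H (Suc n) h F = 2 * sum_blocks_H n h F
     + sum_blocks_V n (\<lambda>p. F (diag h U # p)) + sum_blocks_V n (\<lambda>p. F (diag h D # p))"
  by (simp add: sum_blocks_V_def sum_blocks_H_def sum_paths_Cons sum_UNIV_step cong: option.case_cong)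

lemma sum_blocks_V_H_fibres:
  "sum_blocks_V n F = (\<Sum>k\<le>n. fibre_V n k * sum_paths k F) \<and>
   (\<forall>h. sum_blocks_H n h F = (\<Sum>k\<le>n. fibre_H n k * sum_diag_Cons h k F))"
proof (induction n arbitrary: F)
  case 0
  show ?case by (simp add: sum_blocks_V_def sum_blocks_H_def sum_paths_def paths_0)
next
  case (Suc n)
  have "sum_blocks_V (Suc n) F = 2 * (\<Sum>k\<le>n. fibre_V n k * sum_paths k F)
      + (\<Sum>k\<le>n. fibre_H n k * sum_paths (Suc k) F)"
    using Suc.IH[of F]
    by (simp add: sum_blocks_V_Suc sum_diag_Cons_R_L[symmetric] sum.distrib algebra_simps)
  also have "(\<Sum>k\<le>n. fibre_V n k * sum_paths k F) = (\<Sum>k\<le>Suc n. fibre_V n k * sum_paths k F)"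
    by (rule sum_fibre_V_extend[symmetric]) simp
  also have "(\<Sum>k\<le>n. fibre_H n k * sum_paths (Suc k) F) =
      (\<Sum>k\<le>Suc n. (if k = 0 then 0 else fibre_H n (k - 1)) * sum_paths k F)"
    by (simp only: sum.atMost_Suc_shift) simp
  also have "2 * (\<Sum>k\<le>Suc n. fibre_V n k * sum_paths k F)
      + (\<Sum>k\<le>Suc n. (if k = 0 then 0 else fibre_H n (k - 1)) * sum_paths k F) =
      (\<Sum>k\<le>Suc n. fibre_V (Suc n) k * sum_paths k F)"
    by (simp add: sum_distrib_left sum.distrib[symmetric] algebra_simps)
  finally have "sum_blocks_V (Suc n) F = (\<Sum>k\<le>Suc n. fibre_V (Suc n) k * sum_paths k F)" .
  moreover have "sum_blocks_H (Suc n) h F = (\<Sum>k\<le>Suc n. fibre_H (Suc n) k * sum_diag_Cons h k F)"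
    for h
  proof -
    have "sum_blocks_H (Suc n) h F = 2 * (\<Sum>k\<le>n. fibre_H n k * sum_diag_Cons h k F)
        + (\<Sum>k\<le>n. fibre_V n k * sum_diag_Cons h k F)"
      using Suc.IH[of F] Suc.IH[of "\<lambda>p. F (diag h U # p)"] Suc.IH[of "\<lambda>p. F (diag h D # p)"]
      by (simp add: sum_blocks_H_Suc sum_diag_Cons_def sum.distrib algebra_simps)
    also have "(\<Sum>k\<le>n. fibre_H n k * sum_diag_Cons h k F) =
        (\<Sum>k\<le>Suc n. fibre_H n k * sum_diag_Cons h k F)"
      by (rule sum_fibre_H_extend[symmetric]) simp
    also have "(\<Sum>k\<le>n. fibre_V n k * sum_diag_Cons h k F) =
        (\<Sum>k\<le>Suc n. fibre_V n k * sum_diag_Cons h k F)"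
      by (rule sum_fibre_V_extend[symmetric]) simp
    also have "2 * (\<Sum>k\<le>Suc n. fibre_H n k * sum_diag_Cons h k F)
        + (\<Sum>k\<le>Suc n. fibre_V n k * sum_diag_Cons h k F) =
        (\<Sum>k\<le>Suc n. fibre_H (Suc n) k * sum_diag_Cons h k F)"
      by (simp add: sum_distrib_left sum.distrib[symmetric] algebra_simps)
    finally show ?thesis .
  qed
  ultimately show ?case by blast
qed

definition geom :: "rat fps" where
  "geom = inverse (1 - 2 * fps_X)"

definition tau :: "rat fps" where
  "tau = fps_X * geom"

definition sigma :: "rat fps" where
  "sigma = tau\<^sup>2"

lemma geom_times: "geom * (1 - 2 * fps_X) = 1"
  unfolding geom_def by (rule inverse_mult_eq_1) simp

lemma geom_eq_iff: "(1 - 2 * fps_X) * F = G \<longleftrightarrow> F = geom * G"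
  using geom_times by (auto simp flip: mult.assoc simp: mult.commute[of geom])

lemma times_one_minus_two_X_nth:
  fixes F :: "'a::comm_ring_1 fps"
  shows "((1 - 2 * fps_X) * F) $ n = F $ n - (if n = 0 then 0 else 2 * F $ (n - 1))"
proof -
  have "(1 - 2 * fps_X) * F = F - 2 * (fps_X * F)"
    by (simp add: algebra_simps)
  then show ?thesis
    by (simp add: numeral_fps_const)
qed

lemma fibre_generating_functions:
  "Abs_fps (\<lambda>n. of_int (fibre_V n k)) = tau ^ (2*k) * geom \<and>
   Abs_fps (\<lambda>n. of_int (fibre_H n k)) = tau ^ (2*k + 1) * geom"
proof -
  have V0: "(1 - 2 * fps_X) * Abs_fps (\<lambda>n. of_int (fibre_V n 0)) = (1 :: rat fps)"
    by (rule fps_ext, case_tac n) (simp_all add: times_one_minus_two_X_nth)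
  have V: "(1 - 2 * fps_X) * Abs_fps (\<lambda>n. of_int (fibre_V n (Suc k))) =
      fps_X * Abs_fps (\<lambda>n. of_int (fibre_H n k) :: rat)" for k
    by (rule fps_ext, case_tac n) (simp_all add: times_one_minus_two_X_nth)
  have H: "(1 - 2 * fps_X) * Abs_fps (\<lambda>n. of_int (fibre_H n k)) =
      fps_X * Abs_fps (\<lambda>n. of_int (fibre_V n k) :: rat)" for k
    by (rule fps_ext, case_tac n) (simp_all add: times_one_minus_two_X_nth)
  show ?thesis
  proof (induction k)
    case 0
    have "Abs_fps (\<lambda>n. of_int (fibre_V n 0)) = geom"
      using V0[unfolded geom_eq_iff] by simp
    then show ?case
      using H[of 0, unfolded geom_eq_iff] by (simp add: tau_def algebra_simps)
  next
    case (Suc k)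
    have "Abs_fps (\<lambda>n. of_int (fibre_V n (Suc k))) = tau ^ (2 * Suc k) * geom"
      using V[of k, unfolded geom_eq_iff] Suc.IH by (simp add: tau_def algebra_simps power2_eq_square)
    then show ?case
      using H[of "Suc k", unfolded geom_eq_iff] by (simp add: tau_def algebra_simps)
  qed
qed

lemma sigma_power_nth: "(sigma ^ i) $ Suc m = (if i = 0 then 0 else of_int (fibre_H m (i - 1)))"
proof (cases i)
  case (Suc j)
  have "sigma ^ Suc j = tau ^ Suc (2*j + 1)"
    by (simp only: sigma_def power_mult[symmetric]) simp
  then have "sigma ^ Suc j = fps_X * (tau ^ (2*j + 1) * geom)"
    by (simp only: power_Suc2) (simp add: tau_def mult_ac)
  moreover have "(tau ^ (2*j + 1) * geom) $ m = of_int (fibre_H m j)"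
    by (subst fibre_generating_functions[THEN conjunct2, symmetric]) simp
  ultimately show ?thesis
    using Suc by simp
qed simp

lemma sigma_nth_0: "sigma $ 0 = 0"
  by (simp add: sigma_def tau_def fps_power_zeroth)

section \<open>The functional equation \<open>Cat \<circ> \<sigma> = Cat\<^sup>2\<close>\<close>

lemma fps_eq_0_if_eq_X_times:
  fixes F G :: "'a::idom fps"
  assumes F: "F = fps_X * (F * G)"
  shows "F = 0"
proof (rule ccontr)
  assume "F \<noteq> 0"
  moreover from this F have "G \<noteq> 0" by auto
  ultimately have "subdegree F = 1 + subdegree F + subdegree G"
    by (subst (1) F) simp
  then show False by simp
qed

lemma sigma_fixed_point_unique:
  assumes "W1 = sigma * (1 + W1)\<^sup>2" "W2 = sigma * (1 + W2)\<^sup>2"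
  shows "W1 = W2"
proof -
  have "W1 - W2 = sigma * (1 + W1)\<^sup>2 - sigma * (1 + W2)\<^sup>2"
    using assms by (rule arg_cong2[where f = minus])
  also have "\<dots> = fps_X * ((W1 - W2) * (geom * tau * (2 + W1 + W2)))"
    by (simp add: sigma_def tau_def power2_eq_square algebra_simps)
  finally have "W1 - W2 = 0"
    by (rule fps_eq_0_if_eq_X_times)
  then show ?thesis by simp
qed

lemma Cat_compose_sigma: "Cat oo sigma = Cat\<^sup>2"
proof (rule sigma_fixed_point_unique)
  show "Cat oo sigma = sigma * (1 + (Cat oo sigma))\<^sup>2"
    by (subst (1) Cat_eq) (simp only: fps_compose_mult_distrib[OF sigma_nth_0]
        fps_compose_power[OF sigma_nth_0, symmetric] fps_X_fps_compose_startby0[OF sigma_nth_0]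
        fps_compose_add_distrib fps_compose_1)
  have "1 + Cat\<^sup>2 = (1 + Cat)\<^sup>2 - 2 * Cat"
    by (simp add: power2_eq_square algebra_simps)
  also have "\<dots> = (1 + Cat)\<^sup>2 - 2 * (fps_X * (1 + Cat)\<^sup>2)"
    by (simp only: Cat_eq[symmetric])
  also have "\<dots> = (1 + Cat)\<^sup>2 * (1 - 2 * fps_X)"
    by (simp add: algebra_simps)
  finally have "1 + Cat\<^sup>2 = (1 + Cat)\<^sup>2 * (1 - 2 * fps_X)" .
  then have "sigma * (1 + Cat\<^sup>2)\<^sup>2 = (fps_X * (1 + Cat)\<^sup>2)\<^sup>2 * (geom * (1 - 2 * fps_X))\<^sup>2"
    by (simp add: sigma_def tau_def power_mult_distrib mult_ac)
  also have "\<dots> = Cat\<^sup>2"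
    by (simp only: geom_times Cat_eq[symmetric]) simp
  finally show "Cat\<^sup>2 = sigma * (1 + Cat\<^sup>2)\<^sup>2" by simp
qed

lemma ballot_double:
  assumes "M \<ge> 1"
  shows "ballot (Suc m) (2*M) = (\<Sum>j\<le>m. fibre_H m j * ballot (Suc j) M)"
proof -
  have "(of_int (ballot (Suc m) (2*M)) :: rat) = ((Cat oo sigma) ^ M) $ Suc m"
    by (simp only: Cat_power_nth Cat_compose_sigma power_mult[symmetric])
  also have "\<dots> = (\<Sum>i=0..Suc m. (Cat ^ M) $ i * (sigma ^ i) $ Suc m)"
    by (simp only: fps_compose_power[OF sigma_nth_0] fps_compose_nth)
  also have "\<dots> = of_int (\<Sum>j\<le>m. fibre_H m j * ballot (Suc j) M)"
    by (simp only: sum.atLeast0_atMost_Suc_shift o_def sigma_power_nth Cat_power_nth)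
      (simp add: atLeast0AtMost mult.commute)
  finally show ?thesis
    by (simp only: of_int_eq_iff)
qed

section \<open>Preimages under \<open>\<Phi>\<^sub>L\<close>\<close>

definition rotate_first :: "path \<Rightarrow> path" where
  "rotate_first l = (if vert (hd l) then map rot l else l)"

definition rotate_last :: "path \<Rightarrow> path" where
  "rotate_last l = (if horiz (last l) then butlast l @ [rot (last l)] else l)"

lemma PhiL_eq: "PhiL l = blocks (rotate_last (rotate_first l))"
  by (simp add: PhiL_def rotate_first_def rotate_last_def Let_def)

lemma rotate_last_Cons_snoc: "rotate_last (h # v @ [y]) = h # v @ [if horiz y then rot y else y]"
  by (simp add: rotate_last_def butlast_append)

lemma sum_paths_rotate_first:
  fixes G :: "path \<Rightarrow> 'a::comm_semiring_1"
  shows "(\<Sum>l\<in>paths (Suc k). G (rotate_first l)) =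
   2 * ((\<Sum>w\<in>paths k. G (R # w)) + (\<Sum>w\<in>paths k. G (L # w)))"
proof -
  have "(\<Sum>l\<in>paths (Suc k). G (rotate_first l)) =
      (\<Sum>w\<in>paths k. G (R # map rot w)) + (\<Sum>w\<in>paths k. G (R # w))
      + (\<Sum>w\<in>paths k. G (L # map rot w)) + (\<Sum>w\<in>paths k. G (L # w))"
    by (simp add: sum_paths_Cons sum_UNIV_step rotate_first_def)
  then show ?thesis
    by (simp only: sum_paths_map_rot[of "\<lambda>w. G (R # w)"] sum_paths_map_rot[of "\<lambda>w. G (L # w)"])
      (simp add: distrib_left mult_2 add_ac)
qed

lemma sum_paths_rotate_last:
  fixes G :: "path \<Rightarrow> 'a::comm_semiring_1"
  shows "(\<Sum>w\<in>paths (Suc j). G (rotate_last (h # w))) =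
   2 * (\<Sum>v\<in>paths j. G (h # v @ [U]) + G (h # v @ [D]))"
  by (simp add: sum_paths_snoc sum_UNIV_step rotate_last_Cons_snoc sum.distrib mult_2 add_ac)

lemma sum_blocks_H_Suc_last:
  "horiz h \<Longrightarrow>
   sum_blocks_H (Suc j) h F = (\<Sum>v\<in>paths j. F (blocks (h # v @ [U])) + F (blocks (h # v @ [D])))"
  using blocks_V_H_eq
  by (simp add: sum_blocks_H_def sum_paths_snoc sum_UNIV_step sum.distrib)

lemma sum_paths_PhiL:
  assumes "m \<ge> 1"
  shows "(\<Sum>l\<in>paths (Suc m). F (PhiL l)) = 4 * (\<Sum>k\<le>m. fibre_H m k * sum_paths (Suc k) F)"
proof -
  obtain j where m: "m = Suc j" using assms by (cases m) auto
  have "(\<Sum>l\<in>paths (Suc m). F (PhiL l)) =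
      2 * ((\<Sum>w\<in>paths m. F (blocks (rotate_last (R # w))))
         + (\<Sum>w\<in>paths m. F (blocks (rotate_last (L # w)))))"
    by (simp only: PhiL_eq sum_paths_rotate_first[where G = "\<lambda>l. F (blocks (rotate_last l))"])
  also have "\<dots> = 4 * (sum_blocks_H m R F + sum_blocks_H m L F)"
    by (simp add: m sum_paths_rotate_last[where G = "\<lambda>l. F (blocks l)"] sum_blocks_H_Suc_last
        del: blocks.simps)
  also have "sum_blocks_H m R F + sum_blocks_H m L F = (\<Sum>k\<le>m. fibre_H m k * sum_paths (Suc k) F)"
    using sum_blocks_V_H_fibres[of m F]
    by (simp add: sum.distrib[symmetric] algebra_simps sum_diag_Cons_R_L[symmetric])
  finally show ?thesis .
qed

lemma rotate_last_rotate_first_shape: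
  assumes "length l \<ge> 2"
  obtains h w where "horiz h" "w \<noteq> []" "vert (last w)" "rotate_last (rotate_first l) = h # w"
proof -
  obtain x v y where l: "l = x # v @ [y]"
    using assms by (metis Suc_le_length_iff append_butlast_last_id numeral_2_eq_2 list.size(3)
        Suc_n_not_le_n)
  have "vert (if horiz z then rot z else z)" "horiz x \<or> horiz (rot x)" for z
    by (cases z; cases x; simp)+
  then show ?thesis
    using that by (cases "horiz x") (auto simp: l rotate_first_def rotate_last_Cons_snoc)
qed

lemma length_PhiL:
  assumes "length l \<ge> 2"
  shows "1 \<le> length (PhiL l) \<and> length (PhiL l) < length l"
proof -
  obtain h w where hw: "horiz h" "w \<noteq> []" "vert (last w)" "rotate_last (rotate_first l) = h # w"
    using rotate_last_rotate_first_shape[OF assms] .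
  have "length (rotate_last (rotate_first l)) = length l"
    using assms by (auto simp: rotate_first_def rotate_last_def)
  with hw(4) have len: "Suc (length w) = length l" by simp
  have "blocks_H h w = Some (PhiL l)"
    using hw blocks_V_H_eq by (simp add: PhiL_eq)
  then have "PhiL l \<noteq> [] \<and> 2 * length (PhiL l) \<le> Suc (length w)"
    using blocks_V_H_length by blast
  with len assms show ?thesis by (cases "PhiL l") auto
qed

lemma ex_length_funpow_PhiL_eq_1: "length l \<ge> 1 \<Longrightarrow> \<exists>m. length ((PhiL ^^ m) l) = 1"
proof (induction "length l" arbitrary: l rule: less_induct)
  case less
  show ?case
  proof (cases "length l = 1")
    case True
    then show ?thesis by (metis funpow_0)
  next
    case False
    with less.prems length_PhiL have "1 \<le> length (PhiL l)" "length (PhiL l) < length l"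
      by auto
    then obtain m where "length ((PhiL ^^ m) (PhiL l)) = 1"
      using less.hyps by blast
    then have "length ((PhiL ^^ Suc m) l) = 1"
      by (simp only: funpow_Suc_right o_apply)
    then show ?thesis ..
  qed
qed

lemma cdeg_length_1: "length l = 1 \<Longrightarrow> cdeg l = 0"
  by (simp add: cdeg_def)

lemma cdeg_PhiL:
  assumes "length l \<ge> 2"
  shows "cdeg l = Suc (cdeg (PhiL l))"
proof -
  obtain m where m: "length ((PhiL ^^ m) l) = 1"
    using ex_length_funpow_PhiL_eq_1 assms by fastforce
  have "cdeg l = Suc (LEAST m. length ((PhiL ^^ Suc m) l) = 1)"
    unfolding cdeg_def using assms
    by (intro Least_Suc[where P = "\<lambda>m. length ((PhiL ^^ m) l) = 1", OF m]) simp
  then show ?thesis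
    by (simp only: funpow_Suc_right o_apply cdeg_def)
qed

definition count_cdeg :: "nat \<Rightarrow> nat \<Rightarrow> int" where
  "count_cdeg n r = sum_paths n (\<lambda>l. of_bool (cdeg l = r))"

lemma card_cdeg_eq_count_cdeg: "int (card {l. length l = n \<and> cdeg l = r}) = count_cdeg n r"
proof -
  have "{l. length l = n \<and> cdeg l = r} = {l \<in> paths n. cdeg l = r}"
    by (auto simp: paths_def)
  then have "int (card {l. length l = n \<and> cdeg l = r}) = (\<Sum>l\<in>{l \<in> paths n. cdeg l = r}. 1)"
    by simp
  also have "\<dots> = (\<Sum>l\<in>paths n. if cdeg l = r then 1 else 0)"
    by (rule sum.inter_filter[OF finite_paths])
  finally show ?thesis
    by (simp add: count_cdeg_def sum_paths_def of_bool_def)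
qed

lemma count_cdeg_1: "count_cdeg 1 r = (if r = 0 then 4 else 0)"
  by (simp add: count_cdeg_def sum_paths_def sum_paths_Cons paths_0 UNIV_step cdeg_length_1)

lemma count_cdeg_0: "n \<ge> 2 \<Longrightarrow> count_cdeg n 0 = 0"
  by (auto simp: count_cdeg_def sum_paths_def paths_def cdeg_PhiL intro: sum.neutral)

lemma count_cdeg_Suc:
  assumes "m \<ge> 1"
  shows "count_cdeg (Suc m) (Suc r) = 4 * (\<Sum>k\<le>m. fibre_H m k * count_cdeg (Suc k) r)"
proof -
  have "count_cdeg (Suc m) (Suc r) = (\<Sum>l\<in>paths (Suc m). of_bool (cdeg (PhiL l) = r))"
    unfolding count_cdeg_def sum_paths_def
    using assms by (intro sum.cong) (auto simp: paths_def cdeg_PhiL)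
  then show ?thesis
    by (simp add: sum_paths_PhiL[OF assms, of "\<lambda>l. of_bool (cdeg l = r)"] count_cdeg_def)
qed

definition ballot_sum :: "nat \<Rightarrow> nat \<Rightarrow> int" where
  "ballot_sum n r = (\<Sum>k\<in>{0..n}. int k * (-1) ^ (k - 1) * ballot n (k * 2 ^ r))"

lemma ballot_sum_0: "n \<ge> 1 \<Longrightarrow> ballot_sum n 0 = (if n = 1 then 1 else 0)"
  using alternating_ballot_sum by (simp add: ballot_sum_def)

lemma ballot_sum_1_Suc: "ballot_sum 1 (Suc r) = 0"
proof -
  have "1 < (2::nat) ^ Suc r"
    using one_less_power[of "2::nat" "Suc r"] by simp
  then show ?thesis
    by (simp add: ballot_sum_def ballot_eq_0)
qed

lemma ballot_sum_Suc: "ballot_sum (Suc m) (Suc r) = (\<Sum>j\<le>m. fibre_H m j * ballot_sum (Suc j) r)"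
proof -
  have "ballot_sum (Suc m) (Suc r) =
      (\<Sum>k\<in>{0..Suc m}. \<Sum>j\<le>m. fibre_H m j * (int k * (-1) ^ (k - 1) * ballot (Suc j) (k * 2 ^ r)))"
    unfolding ballot_sum_def
  proof (intro sum.cong refl)
    fix k
    show "int k * (-1) ^ (k - 1) * ballot (Suc m) (k * 2 ^ Suc r) =
        (\<Sum>j\<le>m. fibre_H m j * (int k * (-1) ^ (k - 1) * ballot (Suc j) (k * 2 ^ r)))"
    proof (cases "k = 0")
      case False
      then have "k * 2 ^ r \<ge> 1" by simp
      moreover have "k * 2 ^ Suc r = 2 * (k * 2 ^ r)" by simp
      ultimately show ?thesis
        by (simp only: ballot_double) (simp add: sum_distrib_left algebra_simps)
    qed simp
  qed
  also have "\<dots> = (\<Sum>j\<le>m. fibre_H m j *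
      (\<Sum>k\<in>{0..Suc m}. int k * (-1) ^ (k - 1) * ballot (Suc j) (k * 2 ^ r)))"
    by (simp only: sum_distrib_left) (rule sum.swap)
  also have "\<dots> = (\<Sum>j\<le>m. fibre_H m j * ballot_sum (Suc j) r)"
  proof (intro sum.cong refl arg_cong2[where f = times])
    fix j assume "j \<in> {..m}"
    have "Suc j < k * 2 ^ r" if "k \<in> {0..Suc m} - {0..Suc j}" for k
    proof -
      have "Suc j < k" using that by auto
      also have "k \<le> k * 2 ^ r" by simp
      finally show ?thesis .
    qed
    then show "(\<Sum>k\<in>{0..Suc m}. int k * (-1) ^ (k - 1) * ballot (Suc j) (k * 2 ^ r)) =
        ballot_sum (Suc j) r"
      unfolding ballot_sum_def using \<open>j \<in> {..m}\<close>
      by (intro sum.mono_neutral_right) (auto simp: ballot_eq_0)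
  qed
  finally show ?thesis .
qed

lemma count_cdeg_eq_ballot_sum: "n \<ge> 1 \<Longrightarrow> count_cdeg n r = 4 ^ (r + 1) * ballot_sum n r"
proof (induction r arbitrary: n)
  case 0
  show ?case
  proof (cases "n = 1")
    case True
    then show ?thesis using count_cdeg_1[of 0] ballot_sum_0[of 1] by simp
  next
    case False
    with 0 show ?thesis by (simp add: ballot_sum_0 count_cdeg_0)
  qed
next
  case (Suc r)
  show ?case
  proof (cases "n = 1")
    case True
    then show ?thesis using count_cdeg_1[of "Suc r"] ballot_sum_1_Suc[of r] by simp
  next
    case False
    then obtain m where n: "n = Suc m" and m: "m \<ge> 1"
      using Suc.prems by (cases n) auto
    have "count_cdeg n (Suc r) = 4 * (\<Sum>k\<le>m. fibre_H m k * count_cdeg (Suc k) r)"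
      unfolding n by (rule count_cdeg_Suc[OF m])
    also have "\<dots> = 4 * (\<Sum>k\<le>m. fibre_H m k * (4 ^ (r + 1) * ballot_sum (Suc k) r))"
      using Suc.IH by simp
    also have "\<dots> = 4 ^ (Suc r + 1) * ballot_sum n (Suc r)"
      by (simp add: n ballot_sum_Suc sum_distrib_left algebra_simps)
    finally show ?thesis .
  qed
qed

theorem proposition5:
  fixes n r :: nat
  assumes "n \<ge> 1"
  shows "int (card {l :: path. length l = n \<and> cdeg l = r}) =
         4 ^ (r + 1) * (\<Sum>k\<in>{0..n}. int k * (-1) ^ (k - 1) *
            (binom (2 * n - 1) (int n - int k * 2 ^ r)
             - binom (2 * n - 1) (int n - int k * 2 ^ r - 1)))"
  using count_cdeg_eq_ballot_sum[OF assms]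
  by (simp add: card_cdeg_eq_count_cdeg ballot_sum_def ballot_def)

end
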